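(* Let $m,n\in\mathbb{N}$, $m<n$, and $f\in\mathcal{H}(\mathbb{D})$. Then \[ \Bigl(\sup_{a\in\mathbb{D}}\|f^m\circ\phi_a-f^m(a)\|_{H^2}\Bigr)^{1/m}\le \Bigl(\sup_{a\in\mathbb{D}}\|f^n\circ\phi_a-f^n(a)\|_{H^2}\Bigr)^{1/n}, \] \[ \Bigl(\sup_{a\in\mathbb{D}}\|f^m\circ\phi_a-f^m(a)\|_{A^2}\Bigr)^{1/m}\le \Bigl(\sup_{a\in\mathbb{D}}\|f^n\circ\phi_a-f^n(a)\|_{A^2}\Bigr)^{1/n}. \] In particular, if $f^n\in BMOA$ ($f^n\in\mathscr{B}$), then $f^m\in BMOA$ ($f^m\in\mathscr{B}$). Moreover, if $f^n\in VMOA$ ($f^n\in\mathscr{B}_0$), then $f^m\in VMOA$ ($f^m\in\mathscr{B}_0$).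
   Context: $\mathcal{H}(\mathbb{D})$ is the space of analytic functions on the unit disc $\mathbb{D}$, $\phi_a(z)=\frac{a-z}{1-\overline{a}z}$ for $a\in\mathbb{D}$, $H^2$ is the Hardy space and $A^2$ the (unweighted) Bergman space. The quantities $\sup_{a\in\mathbb{D}}\|f\circ\phi_a-f(a)\|_{H^2}$ and $\sup_{a\in\mathbb{D}}\|f\circ\phi_a-f(a)\|_{A^2}$ are the Garsia seminorms of $BMOA$ and of the Bloch space $\mathscr{B}$ respectively; $BMOA$ ($\mathscr{B}$) consists of those $f$ for which the corresponding quantity is finite. $VMOA$ ($\mathscr{B}_0$) consists of $f\in H^2$ ($f\in A^2$) with $\lim_{|a|\to1^-}\|f\circ\phi_a-f(a)\|_{H^2}=0$ (respectively $\lim_{|a|\to1^-}\|f\circ\phi_a-f(a)\|_{A^2}=0$). *)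

theory Defs
  imports "HOL-Analysis.Analysis"
begin

definition disc_phi :: "complex \<Rightarrow> complex \<Rightarrow> complex" where
  "disc_phi a z = (a - z) / (1 - cnj a * z)"

definition ennroot :: "nat \<Rightarrow> ennreal \<Rightarrow> ennreal" where
  "ennroot k x = (if x = top then top else ennreal (root k (enn2real x)))"

definition hardy_norm :: "(complex \<Rightarrow> complex) \<Rightarrow> ennreal" where
  "hardy_norm g = ennroot 2 (SUP r\<in>{0..<1::real}.
      ennreal (1 / (2 * pi)) *
      (\<integral>\<^sup>+ t\<in>{0..2*pi}. ennreal ((cmod (g (complex_of_real r * cis t)))\<^sup>2) \<partial>lborel))"

definition bergman_norm :: "(complex \<Rightarrow> complex) \<Rightarrow> ennreal" where
  "bergman_norm g = ennroot 2 (ennreal (1 / pi) *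
      (\<integral>\<^sup>+ z\<in>ball 0 1. ennreal ((cmod (g z))\<^sup>2) \<partial>lborel))"

definition garsia_H2 :: "(complex \<Rightarrow> complex) \<Rightarrow> ennreal" where
  "garsia_H2 f = (SUP a\<in>ball 0 1. hardy_norm (\<lambda>z. f (disc_phi a z) - f a))"

definition garsia_A2 :: "(complex \<Rightarrow> complex) \<Rightarrow> ennreal" where
  "garsia_A2 f = (SUP a\<in>ball 0 1. bergman_norm (\<lambda>z. f (disc_phi a z) - f a))"

definition BMOA :: "(complex \<Rightarrow> complex) \<Rightarrow> bool" where
  "BMOA f \<longleftrightarrow> f holomorphic_on ball 0 1 \<and> garsia_H2 f < top"

definition Bloch :: "(complex \<Rightarrow> complex) \<Rightarrow> bool" where
  "Bloch f \<longleftrightarrow> f holomorphic_on ball 0 1 \<and> garsia_A2 f < top"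

definition VMOA :: "(complex \<Rightarrow> complex) \<Rightarrow> bool" where
  "VMOA f \<longleftrightarrow> f holomorphic_on ball 0 1 \<and> hardy_norm f < top \<and>
     (\<forall>e>0. \<exists>r<1. \<forall>a\<in>ball 0 1. r < norm a \<longrightarrow>
        hardy_norm (\<lambda>z. f (disc_phi a z) - f a) < ennreal e)"

definition little_Bloch :: "(complex \<Rightarrow> complex) \<Rightarrow> bool" where
  "little_Bloch f \<longleftrightarrow> f holomorphic_on ball 0 1 \<and> bergman_norm f < top \<and>
     (\<forall>e>0. \<exists>r<1. \<forall>a\<in>ball 0 1. r < norm a \<longrightarrow>
        bergman_norm (\<lambda>z. f (disc_phi a z) - f a) < ennreal e)"

end

theory Submission
  imports Defs "HOL-Complex_Analysis.Complex_Analysis" "HOL-Probability.Probability_Measure"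
begin

text \<open>
  Let \<open>h = f \<circ> \<phi>\<^sub>a\<close>, so \<open>h 0 = f a\<close>. By the mean value property the constant \<open>h 0 ^ k\<close> is
  orthogonal to \<open>h ^ k - h 0 ^ k\<close> on every circle \<open>|z| = r\<close>, so the circle mean of
  \<open>|h ^ k - h 0 ^ k|\<^sup>2\<close> is \<open>I\<^sub>k - y ^ k\<close>, where \<open>I\<^sub>k\<close> is the circle mean of \<open>|h| ^ (2 * k)\<close> and
  \<open>y = |h 0|\<^sup>2\<close>. Lyapunov's inequality gives \<open>I\<^sub>m ^ n \<le> I\<^sub>n ^ m\<close>, and the superadditivity of
  \<open>t \<mapsto> t powr (n / m)\<close> turns this into \<open>(I\<^sub>m - y ^ m) ^ n \<le> (I\<^sub>n - y ^ n) ^ m\<close>. Taking the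
  supremum over \<open>r\<close> gives the Hardy estimate. For the Bergman norm, rotation invariance of
  area measure replaces \<open>|h ^ k - h 0 ^ k|\<^sup>2\<close> by its circle means, and Lyapunov's inequality
  on the disc concludes. Since these estimates hold for each \<open>a\<close>, they pass to the
  suprema and to the limits as \<open>|a| \<rightarrow> 1\<close>; finiteness of the norms of \<open>f ^ m\<close> follows from
  \<open>|w| ^ (2 * m) \<le> 1 + |w| ^ (2 * n)\<close>.
\<close>

section \<open>Roots and powers in \<open>ennreal\<close>\<close>

lemma ennreal_power_strict_mono:
  fixes x y :: ennreal
  assumes "x < y" "0 < n"
  shows "x ^ n < y ^ n"
proof -
  obtain a where a: "x = ennreal a" "0 \<le> a"
    using assms(1) by (cases x rule: ennreal_cases) auto
  show ?thesis
  proof (cases "y = top")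
    case True
    then show ?thesis using a assms(2) by (simp add: ennreal_power power_eq_top_ennreal top.not_eq_extremum)
  next
    case False
    then obtain b where b: "y = ennreal b" "0 \<le> b" by (cases y rule: ennreal_cases) auto
    then have "a < b" using a assms(1) by (simp add: ennreal_less_iff)
    then show ?thesis using a b assms(2) by (simp add: ennreal_power ennreal_less_iff power_strict_mono)
  qed
qed

lemma ennreal_power_le_imp_le:
  fixes x y :: ennreal
  assumes "x ^ n \<le> y ^ n" "0 < n"
  shows "x \<le> y"
  using ennreal_power_strict_mono[of y x n] assms by (meson not_le)

lemma ennroot_power: "0 < k \<Longrightarrow> ennroot k x ^ k = x"
  by (cases "x = top")
     (simp_all add: ennroot_def power_eq_top_ennreal ennreal_power real_root_pow_pos2 less_top)

lemma ennreal_power_le_power_iff: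
  fixes x y :: ennreal
  shows "0 < n \<Longrightarrow> x ^ n \<le> y ^ n \<longleftrightarrow> x \<le> y"
  using ennreal_power_le_imp_le power_mono_ennreal by blast

lemma ennroot_le_iff: "0 < k \<Longrightarrow> ennroot k x \<le> y \<longleftrightarrow> x \<le> y ^ k"
  using ennreal_power_le_power_iff[of k "ennroot k x" y] by (simp add: ennroot_power)

lemma le_ennroot_iff: "0 < k \<Longrightarrow> y \<le> ennroot k x \<longleftrightarrow> y ^ k \<le> x"
  using ennreal_power_le_power_iff[of k y "ennroot k x"] by (simp add: ennroot_power)

lemma ennroot_less_top_iff: "0 < k \<Longrightarrow> ennroot k x < top \<longleftrightarrow> x < top"
  by (simp add: ennroot_def top.not_eq_extremum)

lemma ennroot_le_ennroot_iff:
  assumes "0 < a" "0 < b"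
  shows "ennroot a X \<le> ennroot b Y \<longleftrightarrow> X ^ b \<le> Y ^ a"
proof -
  have "ennroot a X \<le> ennroot b Y \<longleftrightarrow> X \<le> ennroot b Y ^ a"
    using ennroot_le_iff[OF assms(1)] .
  also have "\<dots> \<longleftrightarrow> X ^ b \<le> (ennroot b Y ^ a) ^ b"
    using ennreal_power_le_power_iff[OF assms(2)] by blast
  also have "(ennroot b Y ^ a) ^ b = Y ^ a"
    by (metis ennroot_power[OF assms(2)] mult.commute power_mult)
  finally show ?thesis .
qed

lemma ennroot_power_le_power:
  assumes "X ^ b \<le> Y ^ a" "0 < k"
  shows "ennroot k X ^ b \<le> ennroot k Y ^ a"
proof (rule ennreal_power_le_imp_le[OF _ \<open>0 < k\<close>])
  show "(ennroot k X ^ b) ^ k \<le> (ennroot k Y ^ a) ^ k"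
    using assms by (metis ennroot_power mult.commute power_mult)
qed

lemma SUP_power_le_power:
  fixes f g :: "'a \<Rightarrow> ennreal"
  assumes "\<And>i. i \<in> A \<Longrightarrow> f i ^ n \<le> g i ^ m" "0 < n"
  shows "(SUP i\<in>A. f i) ^ n \<le> (SUP i\<in>A. g i) ^ m"
proof -
  have "f i \<le> ennroot n ((SUP i\<in>A. g i) ^ m)" if "i \<in> A" for i
  proof -
    have "g i ^ m \<le> (SUP i\<in>A. g i) ^ m" by (intro power_mono_ennreal SUP_upper that)
    with assms(1)[OF that] have "f i ^ n \<le> (SUP i\<in>A. g i) ^ m" by (rule order.trans)
    then show ?thesis using le_ennroot_iff[OF assms(2)] by blast
  qed
  then have "(SUP i\<in>A. f i) \<le> ennroot n ((SUP i\<in>A. g i) ^ m)" by (rule SUP_least)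
  then show ?thesis using le_ennroot_iff[OF assms(2)] by blast
qed

lemma ennroot_SUP_le_ennroot_SUP:
  fixes X Y :: "'a \<Rightarrow> ennreal"
  assumes "\<And>i. i \<in> A \<Longrightarrow> X i ^ n \<le> Y i ^ m" "0 < m" "0 < n"
  shows "ennroot m (SUP i\<in>A. X i) \<le> ennroot n (SUP i\<in>A. Y i)"
  unfolding ennroot_le_ennroot_iff[OF assms(2,3)] by (rule SUP_power_le_power[OF assms(1,3)])

lemma power_less_ennreal_imp_less:
  fixes X Y :: ennreal
  assumes "X ^ n \<le> Y ^ m" "Y < ennreal (root m (e ^ n))" "0 < m" "0 < n" "0 < e"
  shows "X < ennreal e"
proof (rule ccontr)
  assume "\<not> X < ennreal e"
  then have "ennreal e ^ n \<le> X ^ n" by (simp add: power_mono_ennreal)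
  also have "\<dots> \<le> Y ^ m" by (rule assms(1))
  also have "\<dots> < ennreal (root m (e ^ n)) ^ m" by (rule ennreal_power_strict_mono[OF assms(2,3)])
  also have "\<dots> = ennreal (root m (e ^ n) ^ m)"
    by (rule ennreal_power) (use assms in \<open>simp add: real_root_ge_zero\<close>)
  also have "\<dots> = ennreal (e ^ n)" using assms by simp
  also have "\<dots> = ennreal e ^ n" using assms by (simp add: ennreal_power)
  finally show False by simp
qed

lemma powr_superadditive:
  fixes a b p :: real
  assumes "0 \<le> a" "0 \<le> b" "1 \<le> p"
  shows "a powr p + b powr p \<le> (a + b) powr p"
proof -
  have split: "x powr p = x * x powr (p - 1)" if "0 \<le> x" for x :: real
    using that assms(3) by (cases "x = 0") (simp_all add: powr_mult_base)
  have "a * a powr (p - 1) + b * b powr (p - 1) \<le> a * (a + b) powr (p - 1) + b * (a + b) powr (p - 1)"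
    using assms by (intro add_mono mult_left_mono powr_mono2) auto
  then show ?thesis
    using split[of a] split[of b] split[of "a + b"] assms by (simp add: distrib_right)
qed

lemma power_powr_divide:
  fixes t :: real
  assumes "0 \<le> t" "0 < m" "0 < n"
  shows "(t ^ m) powr (real n / real m) = t ^ n"
proof (cases "t = 0")
  case False
  then have "(t ^ m) powr (real n / real m) = (t powr real m) powr (real n / real m)"
    using assms by (simp add: powr_realpow)
  also have "\<dots> = t powr real n" using assms by (simp add: powr_powr)
  also have "\<dots> = t ^ n" using assms False by (simp add: powr_realpow)
  finally show ?thesis .
qed (use assms in \<open>simp add: power_0_left\<close>)

lemma powr_divide_power:
  fixes t :: real
  assumes "0 \<le> t" "0 < m" "0 < n"
  shows "(t powr (real n / real m)) ^ m = t ^ n"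
proof (cases "t = 0")
  case False
  then show ?thesis using assms by (simp add: powr_realpow[symmetric] powr_powr)
qed (use assms in \<open>simp add: power_0_left\<close>)

lemma power_diff_power_le:
  fixes x y :: real
  assumes "0 < m" "m < n" "0 \<le> y" "y \<le> x"
  shows "(x ^ m - y ^ m) ^ n \<le> (x ^ n - y ^ n) ^ m"
proof -
  define p where "p = real n / real m"
  define d where "d = x ^ m - y ^ m"
  have p: "1 \<le> p" using assms by (simp add: p_def)
  have d: "0 \<le> d" using assms by (simp add: d_def power_mono)
  have "d powr p + (y ^ m) powr p \<le> (d + y ^ m) powr p"
    using powr_superadditive[OF d _ p] assms by simp
  then have "d powr p \<le> x ^ n - y ^ n"
    using power_powr_divide[of x m n] power_powr_divide[of y m n] assms by (simp add: d_def p_def)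
  have "d ^ n = (d powr p) ^ m" using powr_divide_power[OF d assms(1), of n] assms by (simp add: p_def)
  also have "\<dots> \<le> (x ^ n - y ^ n) ^ m" using \<open>d powr p \<le> x ^ n - y ^ n\<close> by (simp add: power_mono)
  finally show ?thesis by (simp add: d_def)
qed

lemma power_diff_power_le':
  fixes a b y :: real
  assumes "0 < m" "m < n" "0 \<le> y" "y ^ m \<le> a" "0 \<le> b" "a ^ n \<le> b ^ m"
  shows "(a - y ^ m) ^ n \<le> (b - y ^ n) ^ m"
proof -
  have a: "0 \<le> a" using assms by (meson order.trans zero_le_power)
  define x where "x = root m a"
  have x: "0 \<le> x" "x ^ m = a" using a assms(1) by (simp_all add: x_def)
  have "y \<le> x" using assms(1,3,4) x power_mono_iff[of y x m] by simp
  have "(x ^ n) ^ m \<le> b ^ m" using x assms(6) by (metis mult.commute power_mult)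
  then have "x ^ n \<le> b" using assms(1,5) x power_mono_iff[of "x ^ n" b m] by simp
  have "(a - y ^ m) ^ n = (x ^ m - y ^ m) ^ n" by (simp add: x)
  also have "\<dots> \<le> (x ^ n - y ^ n) ^ m" using power_diff_power_le assms \<open>y \<le> x\<close> by blast
  also have "\<dots> \<le> (b - y ^ n) ^ m"
    using \<open>x ^ n \<le> b\<close> \<open>y \<le> x\<close> assms by (intro power_mono) (auto simp: power_mono)
  finally show ?thesis .
qed

lemma powr_ge_tangent:
  fixes x c p :: real
  assumes "0 < c" "0 \<le> x" "1 \<le> p"
  shows "c powr p + p * c powr (p - 1) * (x - c) \<le> x powr p"
proof (cases "x = 0")
  case True
  have "c powr p = c * c powr (p - 1)" using assms by (simp add: powr_mult_base)
  then have "c powr p + p * c powr (p - 1) * (0 - c) = (1 - p) * c powr p" by (simp add: algebra_simps)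
  also have "\<dots> \<le> 0" using assms by (simp add: mult_nonpos_nonneg)
  finally show ?thesis using True by simp
next
  case False
  have "p * c powr (p - 1) * (x - c) \<le> x powr p - c powr p"
  proof (rule convex_on_imp_above_tangent[where A="{0<..}"])
    show "convex_on {0<..} (\<lambda>x. x powr p)" using powr_convex[OF assms(3)] .
    show "((\<lambda>x. x powr p) has_field_derivative p * c powr (p - 1)) (at c within {0<..})"
      using assms by (auto intro!: derivative_eq_intros)
  qed (use assms False in \<open>simp_all add: interior_open\<close>)
  then show ?thesis by simp
qed

section \<open>Lyapunov's inequality\<close>

lemma (in finite_measure) integrable_power_le:
  fixes u :: "'a \<Rightarrow> real"
  assumes "m \<le> n" "u \<in> borel_measurable M" "\<And>x. x \<in> space M \<Longrightarrow> 0 \<le> u x"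
    and "integrable M (\<lambda>x. u x ^ n)"
  shows "integrable M (\<lambda>x. u x ^ m)"
proof (rule Bochner_Integration.integrable_bound[where f="\<lambda>x. 1 + u x ^ n"])
  show "AE x in M. norm (u x ^ m) \<le> norm (1 + u x ^ n)"
  proof (rule AE_I2)
    fix x assume x: "x \<in> space M"
    have "u x ^ m \<le> 1 + u x ^ n"
      using assms(1) assms(3)[OF x] by (cases "u x \<le> 1")
        (auto intro: order.trans[OF power_le_one] order.trans[OF power_increasing])
    then show "norm (u x ^ m) \<le> norm (1 + u x ^ n)" using assms(3)[OF x] by simp
  qed
qed (use assms in auto)

text \<open>Jensen's inequality for \<open>t \<mapsto> t powr (n / m)\<close>, using its tangent line at the mean of \<open>u ^ m\<close>.\<close>
lemma (in prob_space) lyapunov_inequality: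
  fixes u :: "'a \<Rightarrow> real"
  assumes mn: "0 < m" "m < n" and u: "u \<in> borel_measurable M" "\<And>x. x \<in> space M \<Longrightarrow> 0 \<le> u x"
    and int: "integrable M (\<lambda>x. u x ^ n)"
  shows "(expectation (\<lambda>x. u x ^ m)) ^ n \<le> (expectation (\<lambda>x. u x ^ n)) ^ m"
proof -
  define c where "c = expectation (\<lambda>x. u x ^ m)"
  define p where "p = real n / real m"
  have p: "1 \<le> p" using mn by (simp add: p_def)
  have int_m: "integrable M (\<lambda>x. u x ^ m)" by (rule integrable_power_le[OF _ u int]) (use mn in simp)
  have c: "0 \<le> c" unfolding c_def using u by (intro integral_nonneg_AE) auto
  have e: "0 \<le> expectation (\<lambda>x. u x ^ n)" using u by (intro integral_nonneg_AE) auto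
  show ?thesis
  proof (cases "c = 0")
    case True
    then show ?thesis using mn e unfolding c_def by (simp add: power_0_left)
  next
    case False
    then have "0 < c" using c by simp
    have "c powr p = expectation (\<lambda>x. c powr p + p * c powr (p - 1) * (u x ^ m - c))"
      using int_m by (simp add: prob_space c_def)
    also have "\<dots> \<le> expectation (\<lambda>x. u x ^ n)"
    proof (rule integral_mono[OF _ int])
      fix x assume x: "x \<in> space M"
      have "c powr p + p * c powr (p - 1) * (u x ^ m - c) \<le> (u x ^ m) powr p"
        using powr_ge_tangent[OF \<open>0 < c\<close> _ p] u(2)[OF x] by simp
      also have "\<dots> = u x ^ n" using power_powr_divide u(2)[OF x] mn unfolding p_def by simp
      finally show "c powr p + p * c powr (p - 1) * (u x ^ m - c) \<le> u x ^ n" .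
    qed (use int_m in auto)
    finally have "(c powr p) ^ m \<le> (expectation (\<lambda>x. u x ^ n)) ^ m"
      by (intro power_mono) auto
    then show ?thesis using powr_divide_power[OF c mn(1), of n] mn unfolding p_def c_def by simp
  qed
qed

lemma (in prob_space) lyapunov_inequality_nn:
  fixes u :: "'a \<Rightarrow> ennreal"
  assumes "0 < m" "m < n" "u \<in> borel_measurable M"
  shows "(\<integral>\<^sup>+x. u x ^ m \<partial>M) ^ n \<le> (\<integral>\<^sup>+x. u x ^ n \<partial>M) ^ m"
proof (cases "(\<integral>\<^sup>+x. u x ^ n \<partial>M) = top")
  case True
  then show ?thesis using assms by (simp add: power_eq_top_ennreal)
next
  case False
  have [measurable]: "u \<in> borel_measurable M" by (rule assms(3))
  define r where "r x = enn2real (u x)" for x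
  have r: "r \<in> borel_measurable M" "\<And>x. 0 \<le> r x" by (simp_all add: r_def[abs_def])
  have "(\<integral>\<^sup>+x. u x ^ n \<partial>M) \<noteq> \<infinity>" using False by simp
  then have "AE x in M. u x ^ n \<noteq> \<infinity>" by (rule nn_integral_noteq_infinite[rotated]) measurable
  then have "AE x in M. u x = ennreal (r x)"
    using assms by (auto simp: r_def power_eq_top_ennreal less_top)
  then have eq: "(\<integral>\<^sup>+x. u x ^ k \<partial>M) = (\<integral>\<^sup>+x. ennreal (r x ^ k) \<partial>M)" for k
    by (intro nn_integral_cong_AE) (auto simp: ennreal_power r(2))
  have int: "integrable M (\<lambda>x. r x ^ n)"
    using False r by (intro integrableI_nonneg) (auto simp: eq top.not_eq_extremum)
  define E where "E k = expectation (\<lambda>x. r x ^ k)" for k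
  have E: "(\<integral>\<^sup>+x. u x ^ k \<partial>M) = ennreal (E k)" if "k \<le> n" for k
    unfolding eq E_def using integrable_power_le[OF that r(1) _ int] r
    by (intro nn_integral_eq_integral) auto
  have "0 \<le> E k" for k unfolding E_def using r by (intro integral_nonneg_AE) auto
  moreover have "E m ^ n \<le> E n ^ m"
    unfolding E_def using lyapunov_inequality[OF assms(1,2) r(1) _ int] r by simp
  ultimately show ?thesis using assms(2) by (simp add: E ennreal_power ennreal_le_iff)
qed

text \<open>Since \<open>A ^ n \<le> B ^ m\<close> means \<open>A \<le> v ^ m\<close> for \<open>v = ennroot n B\<close>, this reduces to
  Lyapunov's inequality for \<open>v\<close>.\<close>
lemma (in prob_space) nn_integral_power_le_power:
  fixes A B :: "'a \<Rightarrow> ennreal"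
  assumes "0 < m" "m < n" "B \<in> borel_measurable M" "\<And>x. x \<in> space M \<Longrightarrow> A x ^ n \<le> B x ^ m"
  shows "(\<integral>\<^sup>+x. A x \<partial>M) ^ n \<le> (\<integral>\<^sup>+x. B x \<partial>M) ^ m"
proof -
  define v where "v x = ennroot n (B x)" for x
  have n: "0 < n" using assms by simp
  have v: "v \<in> borel_measurable M" unfolding v_def ennroot_def using assms(3) by measurable
  have B: "B x = v x ^ n" for x using ennroot_power[OF n] by (simp add: v_def)
  have "A x \<le> v x ^ m" if "x \<in> space M" for x
    using assms(4)[OF that] ennreal_power_le_power_iff[OF n, of "A x" "v x ^ m"]
    by (simp add: B power_mult[symmetric] mult.commute)
  then have "(\<integral>\<^sup>+x. A x \<partial>M) ^ n \<le> (\<integral>\<^sup>+x. v x ^ m \<partial>M) ^ n"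
    by (intro power_mono_ennreal nn_integral_mono)
  also have "\<dots> \<le> (\<integral>\<^sup>+x. B x \<partial>M) ^ m" unfolding B by (rule lyapunov_inequality_nn[OF assms(1,2) v])
  finally show ?thesis .
qed

section \<open>Rotation invariance of Lebesgue measure on \<open>\<complex>\<close>\<close>

lemma measurable_Complex_pair [measurable]:
  "(\<lambda>p. Complex (fst p) (snd p)) \<in> borel_measurable (lborel \<Otimes>\<^sub>M lborel)"
proof -
  have "(\<lambda>p. complex_of_real (fst p) + \<i> * complex_of_real (snd p)) \<in> borel_measurable (lborel \<Otimes>\<^sub>M lborel)"
    by measurable
  then show ?thesis by (simp add: Complex_eq)
qed

lemma lborel_complex_eq_distr_pair:
  "(lborel :: complex measure) = distr (lborel \<Otimes>\<^sub>M lborel) borel (\<lambda>p. Complex (fst p) (snd p))"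
proof (rule lborel_eqI)
  fix l u :: complex assume lu: "\<And>b. b \<in> Basis \<Longrightarrow> l \<bullet> b \<le> u \<bullet> b"
  have le: "Re l \<le> Re u" "Im l \<le> Im u" using lu[of 1] lu[of \<i>] by (auto simp: Basis_complex_def)
  have "(\<lambda>p. Complex (fst p) (snd p)) -` box l u \<inter> space (lborel \<Otimes>\<^sub>M lborel)
      = {Re l<..<Re u} \<times> {Im l<..<Im u}"
    by (auto simp: box_def Basis_complex_def space_pair_measure)
  then have "emeasure (distr (lborel \<Otimes>\<^sub>M lborel) borel (\<lambda>p. Complex (fst p) (snd p))) (box l u)
      = emeasure (lborel \<Otimes>\<^sub>M lborel) ({Re l<..<Re u} \<times> {Im l<..<Im u})"
    by (subst emeasure_distr) simp_all
  also have "\<dots> = (\<Prod>b\<in>Basis. (u - l) \<bullet> b)"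
    using le by (simp add: lborel.emeasure_pair_measure_Times Basis_complex_def ennreal_mult)
  finally show "emeasure (distr (lborel \<Otimes>\<^sub>M lborel) borel (\<lambda>p. Complex (fst p) (snd p))) (box l u)
      = (\<Prod>b\<in>Basis. (u - l) \<bullet> b)" .
qed simp

lemma nn_integral_lborel_complex:
  fixes G :: "complex \<Rightarrow> ennreal"
  assumes [measurable]: "G \<in> borel_measurable borel"
  shows "(\<integral>\<^sup>+z. G z \<partial>lborel) = (\<integral>\<^sup>+p. G (Complex (fst p) (snd p)) \<partial>(lborel \<Otimes>\<^sub>M lborel))"
  by (subst lborel_complex_eq_distr_pair) (simp add: nn_integral_distr)

lemma nn_integral_lborel_pair_shear_fst:
  fixes K :: "real \<times> real \<Rightarrow> ennreal"
  assumes [measurable]: "K \<in> borel_measurable (lborel \<Otimes>\<^sub>M lborel)"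
  shows "(\<integral>\<^sup>+p. K (fst p + a * snd p, snd p) \<partial>(lborel \<Otimes>\<^sub>M lborel)) = (\<integral>\<^sup>+p. K p \<partial>(lborel \<Otimes>\<^sub>M lborel))"
proof -
  have "(\<integral>\<^sup>+x. K (x + a * y, y) \<partial>lborel) = (\<integral>\<^sup>+x. K (x, y) \<partial>lborel)" for y
    using nn_integral_real_affine[of "\<lambda>x. K (x, y)" 1 "a * y"] by (simp add: add.commute)
  moreover have "(\<lambda>p. K (fst p + a * snd p, snd p)) \<in> borel_measurable (lborel \<Otimes>\<^sub>M lborel)"
    by measurable
  ultimately show ?thesis by (simp add: lborel_pair.nn_integral_snd[symmetric])
qed

lemma nn_integral_lborel_pair_shear_snd:
  fixes K :: "real \<times> real \<Rightarrow> ennreal"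
  assumes [measurable]: "K \<in> borel_measurable (lborel \<Otimes>\<^sub>M lborel)"
  shows "(\<integral>\<^sup>+p. K (fst p, snd p + b * fst p) \<partial>(lborel \<Otimes>\<^sub>M lborel)) = (\<integral>\<^sup>+p. K p \<partial>(lborel \<Otimes>\<^sub>M lborel))"
proof -
  have "(\<integral>\<^sup>+y. K (x, y + b * x) \<partial>lborel) = (\<integral>\<^sup>+y. K (x, y) \<partial>lborel)" for x
    using nn_integral_real_affine[of "\<lambda>y. K (x, y)" 1 "b * x"] by (simp add: add.commute)
  moreover have "(\<lambda>p. K (fst p, snd p + b * fst p)) \<in> borel_measurable (lborel \<Otimes>\<^sub>M lborel)"
    by measurable
  ultimately show ?thesis by (simp add: lborel.nn_integral_fst[symmetric])
qed

text \<open>The rotation by \<open>w = c + \<i> s\<close> is the product of three shears (x- by \<open>-t\<close>, y- by \<open>s\<close>, x- by \<open>-t\<close>) with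
  \<open>t = s / (1 + c) = tan (\<theta> / 2)\<close>; this needs \<open>w \<noteq> -1\<close>.\<close>
lemma nn_integral_lborel_rotate_aux:
  fixes G :: "complex \<Rightarrow> ennreal"
  assumes [measurable]: "G \<in> borel_measurable borel" and w: "norm w = 1" "w \<noteq> -1"
  shows "(\<integral>\<^sup>+z. G (w * z) \<partial>lborel) = (\<integral>\<^sup>+z. G z \<partial>lborel)"
proof -
  define c s where "c = Re w" and "s = Im w"
  have cs: "c\<^sup>2 + s\<^sup>2 = 1" using w(1) unfolding c_def s_def by (simp add: cmod_def)
  have "1 + c \<noteq> 0"
  proof
    assume "1 + c = 0"
    then have "c = -1" by simp
    with cs have "s = 0" by (simp add: power2_eq_square)
    with \<open>c = -1\<close> show False using w(2) unfolding c_def s_def by (simp add: complex_eq_iff)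
  qed
  define t where "t = s / (1 + c)"
  have t: "1 - t * s = c" "t * (1 + c) = s"
    using \<open>1 + c \<noteq> 0\<close> cs unfolding t_def by (simp_all add: field_simps power2_eq_square)
  define K where "K p = G (Complex (fst p) (snd p))" for p
  define K2 where "K2 p = K (fst p - t * snd p, snd p)" for p
  define K1 where "K1 p = K2 (fst p, snd p + s * fst p)" for p
  have [measurable]: "K \<in> borel_measurable (lborel \<Otimes>\<^sub>M lborel)" "K2 \<in> borel_measurable (lborel \<Otimes>\<^sub>M lborel)"
    "K1 \<in> borel_measurable (lborel \<Otimes>\<^sub>M lborel)" "(\<lambda>z. G (w * z)) \<in> borel_measurable borel"
    unfolding K_def[abs_def] K1_def[abs_def] K2_def[abs_def] by measurable
  have rot: "G (w * Complex x y) = K1 (x - t * y, y)" for x y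
  proof -
    have "w * Complex x y = Complex (c * x - s * y) (s * x + c * y)"
      unfolding c_def s_def by (simp add: complex_eq_iff)
    moreover have "y + s * (x - t * y) = s * x + c * y"
      using t(1) by (simp add: algebra_simps flip: t(1))
    moreover have "x - t * y - t * (s * x + c * y) = c * x - s * y"
    proof -
      have "x - t * y - t * (s * x + c * y) = (1 - t * s) * x - (t * (1 + c)) * y"
        by (simp add: algebra_simps)
      then show ?thesis using t by simp
    qed
    ultimately show ?thesis by (simp add: K1_def K2_def K_def)
  qed
  have "(\<integral>\<^sup>+z. G (w * z) \<partial>lborel) = (\<integral>\<^sup>+p. K1 (fst p + (- t) * snd p, snd p) \<partial>(lborel \<Otimes>\<^sub>M lborel))"
    by (simp add: nn_integral_lborel_complex rot)
  also have "\<dots> = (\<integral>\<^sup>+p. K1 p \<partial>(lborel \<Otimes>\<^sub>M lborel))"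
    by (rule nn_integral_lborel_pair_shear_fst) simp
  also have "\<dots> = (\<integral>\<^sup>+p. K2 p \<partial>(lborel \<Otimes>\<^sub>M lborel))"
    unfolding K1_def by (rule nn_integral_lborel_pair_shear_snd) simp
  also have "\<dots> = (\<integral>\<^sup>+p. K p \<partial>(lborel \<Otimes>\<^sub>M lborel))"
    unfolding K2_def using nn_integral_lborel_pair_shear_fst[of K "- t"] by simp
  also have "\<dots> = (\<integral>\<^sup>+z. G z \<partial>lborel)" by (simp add: K_def nn_integral_lborel_complex)
  finally show ?thesis .
qed

lemma nn_integral_lborel_rotate:
  fixes G :: "complex \<Rightarrow> ennreal"
  assumes G [measurable]: "G \<in> borel_measurable borel" and w: "norm w = 1"
  shows "(\<integral>\<^sup>+z. G (w * z) \<partial>lborel) = (\<integral>\<^sup>+z. G z \<partial>lborel)"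
proof (cases "w = -1")
  case True
  have i: "norm \<i> = 1" "\<i> \<noteq> -1" by (simp_all add: complex_eq_iff)
  have "(\<integral>\<^sup>+z. G (\<i> * (\<i> * z)) \<partial>lborel) = (\<integral>\<^sup>+z. G (\<i> * z) \<partial>lborel)"
    by (rule nn_integral_lborel_rotate_aux[OF _ i]) simp
  also have "\<dots> = (\<integral>\<^sup>+z. G z \<partial>lborel)" by (rule nn_integral_lborel_rotate_aux[OF G i])
  finally show ?thesis using True by (simp add: mult.assoc[symmetric])
qed (use nn_integral_lborel_rotate_aux[OF G w] in simp)

definition circular_mean :: "(complex \<Rightarrow> ennreal) \<Rightarrow> complex \<Rightarrow> ennreal" where
  "circular_mean G z = (\<integral>\<^sup>+s\<in>{0..1}. G (z * cis (2 * pi * s)) \<partial>lborel)"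

lemma measurable_cis_2pi [measurable]: "(\<lambda>s::real. cis (2 * pi * s)) \<in> borel_measurable borel"
  by (intro borel_measurable_continuous_onI continuous_intros)

lemma borel_measurable_circular_mean [measurable]:
  assumes [measurable]: "G \<in> borel_measurable borel"
  shows "circular_mean G \<in> borel_measurable borel"
proof -
  have "(\<lambda>p. G (fst p * cis (2 * pi * snd p)) * indicator {0..1} (snd p))
      \<in> borel_measurable (lborel \<Otimes>\<^sub>M lborel)" by measurable
  from lborel.borel_measurable_nn_integral_fst[OF this]
  show ?thesis unfolding circular_mean_def[abs_def] by simp
qed

lemma nn_integral_circular_mean:
  assumes [measurable]: "G \<in> borel_measurable borel"
  shows "(\<integral>\<^sup>+z. circular_mean G z \<partial>lborel) = (\<integral>\<^sup>+z. G z \<partial>lborel)"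
proof -
  have [measurable]: "(\<lambda>p. G (fst p * cis (2 * pi * snd p)) * indicator {0..1} (snd p))
      \<in> borel_measurable (lborel \<Otimes>\<^sub>M lborel)" by measurable
  have rotate: "(\<integral>\<^sup>+z. G (z * cis (2 * pi * s)) \<partial>lborel) = (\<integral>\<^sup>+z. G z \<partial>lborel)" for s
    using nn_integral_lborel_rotate[of G "cis (2 * pi * s)"] by (simp add: mult.commute)
  have "(\<integral>\<^sup>+z. circular_mean G z \<partial>lborel)
      = (\<integral>\<^sup>+s. (\<integral>\<^sup>+z. G (z * cis (2 * pi * s)) \<partial>lborel) * indicator {0..1} s \<partial>lborel)"
    unfolding circular_mean_def
    by (subst lborel_pair.Fubini') (simp_all add: nn_integral_multc)
  also have "\<dots> = (\<integral>\<^sup>+s. (\<integral>\<^sup>+z. G z \<partial>lborel) * indicator {0..1::real} s \<partial>lborel)"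
    by (simp only: rotate)
  also have "\<dots> = (\<integral>\<^sup>+z. G z \<partial>lborel)" by (simp add: nn_integral_cmult_indicator)
  finally show ?thesis .
qed

lemma circular_mean_mult_indicator_ball:
  "circular_mean (\<lambda>w. G w * indicator (ball 0 r) w) z = circular_mean G z * indicator (ball 0 r) z"
  unfolding circular_mean_def
  by (simp add: indicator_def norm_mult nn_integral_multc[symmetric] mult_ac)

section \<open>Circle means of holomorphic functions\<close>

lemma continuous_on_circle:
  assumes "continuous_on (ball 0 1) F" "norm z < 1"
  shows "continuous_on UNIV (\<lambda>s::real. F (z * cis s))"
  by (rule continuous_on_compose2[OF assms(1)]) (use assms(2) in \<open>auto intro!: continuous_intros simp: norm_mult\<close>)

lemma cis_2pi_eq_exp: "cis (2 * pi * s) = exp (2 * of_real pi * \<i> * of_real s)"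
  by (simp add: cis_conv_exp mult.commute mult.left_commute)

lemma mean_value_circle:
  assumes F: "F holomorphic_on ball 0 1" and z: "norm z < 1"
  shows "((\<lambda>s. F (z * cis (2 * pi * s))) has_integral F 0) {0..1}"
proof (cases "z = 0")
  case True
  then show ?thesis using has_integral_const_real[of "F 0" 0 1] by simp
next
  case False
  define g where "g w = F (z * w)" for w
  have "(\<lambda>w. z * w) ` ball 0 (1 / norm z) \<subseteq> ball 0 1"
    using False by (auto simp: norm_mult field_simps)
  then have "g holomorphic_on ball 0 (1 / norm z)"
    unfolding g_def using holomorphic_on_compose_gen[OF _ F, of "\<lambda>w. z * w"]
    by (auto simp: o_def intro: holomorphic_intros)
  moreover have "cball 0 1 \<subseteq> ball (0::complex) (1 / norm z)"
  proof
    fix x :: complex assume "x \<in> cball 0 1"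
    then have "norm x * norm z < 1" using z by (simp add: le_less_trans[OF mult_left_le_one_le])
    then show "x \<in> ball 0 (1 / norm z)" using False by (simp add: field_simps)
  qed
  ultimately have "continuous_on (cball 0 1) g" "g holomorphic_on ball 0 1"
    by (meson holomorphic_on_imp_continuous_on holomorphic_on_subset ball_subset_cball order.trans)+
  from Cauchy_integral_circlepath[OF this, of 0]
  have "((\<lambda>x. g (circlepath 0 1 x) / (circlepath 0 1 x - 0) * vector_derivative (circlepath 0 1) (at x))
      has_integral (2 * of_real pi * \<i> * g 0)) {0..1}"
    by (simp add: has_contour_integral)
  then have "((\<lambda>x. (2 * of_real pi * \<i>) * g (exp (2 * of_real pi * \<i> * of_real x)))
      has_integral (2 * of_real pi * \<i> * g 0)) {0..1}"
    by (rule has_integral_eq[rotated]) (unfold vector_derivative_circlepath, simp add: circlepath field_simps)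
  then show ?thesis
    by (subst (asm) has_integral_mult_right_iff) (auto simp: g_def cis_2pi_eq_exp)
qed

text \<open>By the mean value property, \<open>F 0\<close> is orthogonal to \<open>F - F 0\<close> on every circle.\<close>
lemma circular_mean_sq_norm_diff:
  assumes F: "F holomorphic_on ball 0 1" and z: "norm z < 1"
  defines "I \<equiv> integral {0..1} (\<lambda>s. (cmod (F (z * cis (2 * pi * s))))\<^sup>2)"
  shows "circular_mean (\<lambda>w. ennreal ((cmod (F w - F 0))\<^sup>2)) z = ennreal (I - (cmod (F 0))\<^sup>2)"
    and "(cmod (F 0))\<^sup>2 \<le> I"
proof -
  define c where "c = F 0"
  define f where "f s = F (z * cis (2 * pi * s))" for s
  have "continuous_on {0..1} (\<lambda>s. (cmod (f s))\<^sup>2)"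
    unfolding f_def using continuous_on_circle[OF holomorphic_on_imp_continuous_on[OF F] z]
    by (auto intro!: continuous_intros intro: continuous_on_compose2)
  then have sq: "((\<lambda>s. (cmod (f s))\<^sup>2) has_integral I) {0..1}"
    unfolding I_def f_def by (intro integrable_integral integrable_continuous_interval)
  have "((\<lambda>s. cnj c * f s) has_integral cnj c * c) {0..1}"
    unfolding c_def f_def by (intro has_integral_mult_right mean_value_circle[OF F z])
  from has_integral_linear[OF this bounded_linear_Re]
  have "((\<lambda>s. Re (cnj c * f s)) has_integral Re (cnj c * c)) {0..1}" by (simp add: o_def)
  moreover have "Re (cnj c * c) = (cmod c)\<^sup>2"
    unfolding cmod_power2 by (simp add: power2_eq_square)
  ultimately have re: "((\<lambda>s. Re (cnj c * f s)) has_integral (cmod c)\<^sup>2) {0..1}" by simp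
  have "((\<lambda>s. (cmod (f s))\<^sup>2 - 2 * Re (cnj c * f s) + (cmod c)\<^sup>2)
      has_integral (I - 2 * (cmod c)\<^sup>2 + (cmod c)\<^sup>2)) {0..1}"
    using has_integral_const_real[of "(cmod c)\<^sup>2" 0 1]
    by (intro has_integral_add has_integral_diff sq has_integral_mult_right[of _ _ _ 2, simplified] re) simp
  moreover have "(cmod (f s - c))\<^sup>2 = (cmod (f s))\<^sup>2 - 2 * Re (cnj c * f s) + (cmod c)\<^sup>2" for s
    unfolding cmod_power2 by (simp add: power2_eq_square algebra_simps)
  ultimately have diff: "((\<lambda>s. (cmod (f s - c))\<^sup>2) has_integral (I - (cmod c)\<^sup>2)) {0..1}" by simp
  from nn_integral_has_integral_lebesgue'[OF _ diff]
  show "circular_mean (\<lambda>w. ennreal ((cmod (F w - F 0))\<^sup>2)) z = ennreal (I - (cmod (F 0))\<^sup>2)"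
    by (simp add: circular_mean_def f_def c_def)
  show "(cmod (F 0))\<^sup>2 \<le> I" using has_integral_nonneg[OF diff] by (simp add: c_def)
qed

lemma prob_space_uniform_unit_interval: "prob_space (uniform_measure lborel {0..1::real})"
  by (rule prob_space_uniform_measure) simp_all

lemma nn_integral_uniform_unit_interval:
  assumes "f \<in> borel_measurable borel"
  shows "(\<integral>\<^sup>+s. f s \<partial>uniform_measure lborel {0..1::real}) = (\<integral>\<^sup>+s\<in>{0..1}. f s \<partial>lborel)"
  using assms by (subst nn_integral_uniform_measure) (simp_all add: divide_ennreal_def)

lemma circular_mean_power_diff_le:
  assumes h: "h holomorphic_on ball 0 1" and z: "norm z < 1" and mn: "0 < m" "m < n"
  shows "circular_mean (\<lambda>w. ennreal ((cmod (h w ^ m - h 0 ^ m))\<^sup>2)) z ^ n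
       \<le> circular_mean (\<lambda>w. ennreal ((cmod (h w ^ n - h 0 ^ n))\<^sup>2)) z ^ m"
proof -
  define u where "u s = (cmod (h (z * cis (2 * pi * s))))\<^sup>2" for s
  define I where "I k = integral {0..1} (\<lambda>s. u s ^ k)" for k
  define y where "y = (cmod (h 0))\<^sup>2"
  have sq_power: "(cmod (x ^ k))\<^sup>2 = ((cmod x)\<^sup>2) ^ k" for x :: complex and k
    by (simp add: norm_power power_mult[symmetric] mult.commute)
  have "(\<lambda>w. h w ^ k) holomorphic_on ball 0 1" for k using h by (intro holomorphic_intros)
  note orth = circular_mean_sq_norm_diff[OF this z]
  have diff: "circular_mean (\<lambda>w. ennreal ((cmod (h w ^ k - h 0 ^ k))\<^sup>2)) z = ennreal (I k - y ^ k)"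
    and y: "y ^ k \<le> I k" for k
    using orth[of k] by (simp_all add: sq_power u_def I_def y_def)
  have cont: "continuous_on UNIV u"
    unfolding u_def using continuous_on_circle[OF holomorphic_on_imp_continuous_on[OF h] z]
    by (auto intro!: continuous_intros intro: continuous_on_compose2)
  have [measurable]: "u \<in> borel_measurable borel" by (rule borel_measurable_continuous_onI[OF cont])
  have I: "(\<integral>\<^sup>+s. ennreal (u s) ^ k \<partial>uniform_measure lborel {0..1}) = ennreal (I k)" for k
  proof -
    have "((\<lambda>s. u s ^ k) has_integral I k) {0..1}"
      unfolding I_def using cont
      by (intro integrable_integral integrable_continuous_interval continuous_intros)
         (auto intro: continuous_on_subset)
    from nn_integral_has_integral_lebesgue'[OF _ this]
    have "(\<integral>\<^sup>+s\<in>{0..1}. ennreal (u s ^ k) \<partial>lborel) = ennreal (I k)" by (simp add: u_def)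
    moreover have "(\<lambda>s. ennreal (u s) ^ k) \<in> borel_measurable borel" by measurable
    ultimately show ?thesis by (simp add: nn_integral_uniform_unit_interval ennreal_power u_def)
  qed
  interpret P: prob_space "uniform_measure lborel {0..1::real}"
    by (rule prob_space_uniform_unit_interval)
  have "(\<lambda>s. ennreal (u s)) \<in> borel_measurable (uniform_measure lborel {0..1})"
    by (subst measurable_cong_sets[OF sets_uniform_measure refl]) simp_all
  from P.lyapunov_inequality_nn[OF mn this] have "ennreal (I m) ^ n \<le> ennreal (I n) ^ m"
    by (simp only: I)
  moreover have "0 \<le> I k" for k using y[of k] y_def by (meson order.trans zero_le_power zero_le_power2)
  ultimately have "I m ^ n \<le> I n ^ m" by (simp add: ennreal_power ennreal_le_iff)
  then have "(I m - y ^ m) ^ n \<le> (I n - y ^ n) ^ m"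
    using power_diff_power_le'[OF mn _ y] \<open>\<And>k. 0 \<le> I k\<close> by (simp add: y_def)
  then show ?thesis using y by (simp add: diff ennreal_power ennreal_le_iff)
qed

section \<open>Hardy and Bergman norms\<close>

lemma circular_mean_eq_normalized_integral:
  assumes [measurable]: "(\<lambda>t. G (z * cis t)) \<in> borel_measurable borel"
  shows "circular_mean G z = ennreal (1 / (2 * pi)) * (\<integral>\<^sup>+t\<in>{0..2 * pi}. G (z * cis t) \<partial>lborel)"
proof -
  have ind: "indicator {0..2 * pi} (2 * pi * s) = (indicator {0..1} s :: ennreal)" for s :: real
  proof -
    have "0 \<le> 2 * pi * s \<longleftrightarrow> 0 \<le> s" "2 * pi * s \<le> 2 * pi \<longleftrightarrow> s \<le> 1"
      using mult_le_cancel_left_pos[of "2 * pi" 0 s] mult_le_cancel_left_pos[of "2 * pi" s 1] by simp_all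
    then show ?thesis by (simp add: indicator_def)
  qed
  have "(\<integral>\<^sup>+t\<in>{0..2 * pi}. G (z * cis t) \<partial>lborel) = ennreal (2 * pi) * circular_mean G z"
    using nn_integral_real_affine[of "\<lambda>t. G (z * cis t) * indicator {0..2 * pi} t" "2 * pi" 0]
    by (simp add: circular_mean_def ind)
  moreover have "ennreal (1 / (2 * pi)) * ennreal (2 * pi) = 1" by (simp flip: ennreal_mult)
  ultimately show ?thesis by (simp add: mult.assoc[symmetric])
qed

lemma hardy_norm_eq_circular_mean:
  assumes "continuous_on (ball 0 1) g"
  shows "hardy_norm g
    = ennroot 2 (SUP r\<in>{0..<1}. circular_mean (\<lambda>w. ennreal ((cmod (g w))\<^sup>2)) (complex_of_real r))"
  unfolding hardy_norm_def
proof (intro arg_cong[where f = "ennroot 2"] SUP_cong refl)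
  fix r :: real assume "r \<in> {0..<1}"
  then have "continuous_on UNIV (\<lambda>t. (cmod (g (complex_of_real r * cis t)))\<^sup>2)"
    by (intro continuous_intros continuous_on_circle[OF assms]) auto
  then have [measurable]: "(\<lambda>t. (cmod (g (complex_of_real r * cis t)))\<^sup>2) \<in> borel_measurable borel"
    by (rule borel_measurable_continuous_onI)
  show "ennreal (1 / (2 * pi)) *
      (\<integral>\<^sup>+t\<in>{0..2 * pi}. ennreal ((cmod (g (complex_of_real r * cis t)))\<^sup>2) \<partial>lborel)
    = circular_mean (\<lambda>w. ennreal ((cmod (g w))\<^sup>2)) (complex_of_real r)"
    by (rule circular_mean_eq_normalized_integral[symmetric]) measurable
qed

lemma hardy_norm_power_diff_le:
  assumes h: "h holomorphic_on ball 0 1" and mn: "0 < m" "m < n"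
  shows "hardy_norm (\<lambda>z. h z ^ m - h 0 ^ m) ^ n \<le> hardy_norm (\<lambda>z. h z ^ n - h 0 ^ n) ^ m"
proof -
  have "continuous_on (ball 0 1) (\<lambda>z. h z ^ k - h 0 ^ k)" for k
    by (intro continuous_intros holomorphic_on_imp_continuous_on[OF h])
  moreover have
    "(SUP r\<in>{0..<1}. circular_mean (\<lambda>w. ennreal ((cmod (h w ^ m - h 0 ^ m))\<^sup>2)) (complex_of_real r)) ^ n
   \<le> (SUP r\<in>{0..<1}. circular_mean (\<lambda>w. ennreal ((cmod (h w ^ n - h 0 ^ n))\<^sup>2)) (complex_of_real r)) ^ m"
    by (rule SUP_power_le_power[OF circular_mean_power_diff_le[OF h _ mn]]) (use mn in auto)
  ultimately show ?thesis by (simp add: hardy_norm_eq_circular_mean ennroot_power_le_power)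
qed

lemma borel_measurable_continuous_on_ennreal_indicator:
  fixes f :: "'a::topological_space \<Rightarrow> real"
  assumes "continuous_on S f" "S \<in> sets borel"
  shows "(\<lambda>x. ennreal (f x) * indicator S x) \<in> borel_measurable borel"
proof -
  have "(\<lambda>x. indicator S x *\<^sub>R f x) \<in> borel_measurable borel"
    by (rule borel_measurable_continuous_on_indicator[OF assms(2,1)])
  then have "(\<lambda>x. ennreal (indicator S x *\<^sub>R f x)) \<in> borel_measurable borel" by measurable
  moreover have "ennreal (indicator S x *\<^sub>R f x) = ennreal (f x) * indicator S x" for x
    by (simp add: indicator_def)
  ultimately show ?thesis by simp
qed

lemma emeasure_unit_disc: "emeasure lborel (ball (0::complex) 1) = ennreal pi"
  using emeasure_ball[where c = "0::complex" and r = 1] by (simp add: unit_ball_vol_2)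

lemma bergman_norm_eq_circular_mean:
  assumes "continuous_on (ball 0 1) g"
  shows "bergman_norm g = ennroot 2 (\<integral>\<^sup>+z. circular_mean (\<lambda>w. ennreal ((cmod (g w))\<^sup>2) * indicator (ball 0 1) w) z
    \<partial>uniform_measure lborel (ball 0 1))"
proof -
  define D where "D = ball (0::complex) 1"
  define G where "G w = ennreal ((cmod (g w))\<^sup>2) * indicator D w" for w
  have [measurable]: "G \<in> borel_measurable borel"
    unfolding G_def[abs_def] D_def using assms
    by (intro borel_measurable_continuous_on_ennreal_indicator continuous_intros) auto
  have "circular_mean G z * indicator D z = circular_mean G z" for z
    unfolding G_def D_def circular_mean_mult_indicator_ball by (simp add: indicator_def)
  then have "(\<integral>\<^sup>+z. circular_mean G z \<partial>uniform_measure lborel D) = (\<integral>\<^sup>+z. circular_mean G z \<partial>lborel) / ennreal pi"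
    by (subst nn_integral_uniform_measure) (simp_all add: D_def emeasure_unit_disc)
  also have "\<dots> = ennreal (1 / pi) * (\<integral>\<^sup>+z\<in>D. ennreal ((cmod (g z))\<^sup>2) \<partial>lborel)"
    by (simp add: nn_integral_circular_mean G_def divide_ennreal_def inverse_ennreal mult.commute inverse_eq_divide)
  finally show ?thesis unfolding bergman_norm_def G_def[abs_def] D_def by simp
qed

lemma bergman_norm_power_diff_le:
  assumes h: "h holomorphic_on ball 0 1" and mn: "0 < m" "m < n"
  shows "bergman_norm (\<lambda>z. h z ^ m - h 0 ^ m) ^ n \<le> bergman_norm (\<lambda>z. h z ^ n - h 0 ^ n) ^ m"
proof -
  define G where "G k w = ennreal ((cmod (h w ^ k - h 0 ^ k))\<^sup>2) * indicator (ball 0 1) w" for k w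
  have cont: "continuous_on (ball 0 1) (\<lambda>z. h z ^ k - h 0 ^ k)" for k
    by (intro continuous_intros holomorphic_on_imp_continuous_on[OF h])
  have [measurable]: "G k \<in> borel_measurable borel" for k
    unfolding G_def[abs_def] using holomorphic_on_imp_continuous_on[OF h]
    by (intro borel_measurable_continuous_on_ennreal_indicator continuous_intros) auto
  interpret P: prob_space "uniform_measure lborel (ball (0::complex) 1)"
    by (rule prob_space_uniform_measure) (simp_all add: emeasure_unit_disc)
  have "(\<integral>\<^sup>+z. circular_mean (G m) z \<partial>uniform_measure lborel (ball 0 1)) ^ n
      \<le> (\<integral>\<^sup>+z. circular_mean (G n) z \<partial>uniform_measure lborel (ball 0 1)) ^ m"
  proof (rule P.nn_integral_power_le_power[OF mn])
    show "circular_mean (G n) \<in> borel_measurable (uniform_measure lborel (ball 0 1))"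
      by (subst measurable_cong_sets[OF sets_uniform_measure refl]) simp_all
    fix z :: complex
    show "circular_mean (G m) z ^ n \<le> circular_mean (G n) z ^ m"
      using circular_mean_power_diff_le[OF h _ mn, of z] mn
      by (cases "z \<in> ball 0 1") (simp_all add: G_def[abs_def] circular_mean_mult_indicator_ball power_0_left)
  qed
  then show ?thesis
    unfolding G_def[abs_def] by (simp add: bergman_norm_eq_circular_mean[OF cont] ennroot_power_le_power)
qed

section \<open>Garsia seminorms of powers\<close>

lemma disc_phi_0 [simp]: "disc_phi a 0 = a"
  by (simp add: disc_phi_def)

lemma holomorphic_on_compose_disc_phi:
  assumes "f holomorphic_on ball 0 1" "a \<in> ball 0 1"
  shows "(\<lambda>z. f (disc_phi a z)) holomorphic_on ball 0 1"
proof -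
  have phi: "disc_phi a = (\<lambda>z. - Moebius_function 0 a z)"
    by (simp add: fun_eq_iff disc_phi_def Moebius_function_simple minus_divide_left)
  have "disc_phi a holomorphic_on ball 0 1"
    using assms(2) unfolding phi by (intro holomorphic_intros Moebius_function_holomorphic) auto
  moreover have "disc_phi a ` ball 0 1 \<subseteq> ball 0 1"
    using assms(2) Moebius_function_norm_lt_1 by (auto simp: phi)
  ultimately show ?thesis using holomorphic_on_compose_gen[OF _ assms(1)] by (simp add: o_def)
qed

lemma set_nn_integral_sq_norm_power_le:
  fixes f :: "'a \<Rightarrow> complex"
  assumes "(\<lambda>x. ennreal ((cmod (f x ^ n))\<^sup>2) * indicator A x) \<in> borel_measurable M"
    and "A \<in> sets M" and "m \<le> n"
  shows "(\<integral>\<^sup>+x\<in>A. ennreal ((cmod (f x ^ m))\<^sup>2) \<partial>M)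
    \<le> emeasure M A + (\<integral>\<^sup>+x\<in>A. ennreal ((cmod (f x ^ n))\<^sup>2) \<partial>M)"
proof -
  have "ennreal ((cmod (f x ^ m))\<^sup>2) \<le> 1 + ennreal ((cmod (f x ^ n))\<^sup>2)" for x
  proof -
    define t where "t = (cmod (f x))\<^sup>2"
    have "t ^ m \<le> 1 + t ^ n"
      using \<open>m \<le> n\<close> by (cases "t \<le> 1")
        (auto simp: t_def power_le_one add_increasing2 intro: order.trans[OF power_increasing])
    then have "ennreal (t ^ m) \<le> 1 + ennreal (t ^ n)"
      using ennreal_leI by (fastforce simp: ennreal_plus t_def)
    moreover have "(cmod (f x ^ k))\<^sup>2 = t ^ k" for k
      by (simp add: t_def norm_power power_mult[symmetric] mult.commute)
    ultimately show ?thesis by simp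
  qed
  then have "(\<integral>\<^sup>+x\<in>A. ennreal ((cmod (f x ^ m))\<^sup>2) \<partial>M)
      \<le> (\<integral>\<^sup>+x. indicator A x + ennreal ((cmod (f x ^ n))\<^sup>2) * indicator A x \<partial>M)"
    by (intro nn_integral_mono) (simp add: indicator_def)
  also have "\<dots> = emeasure M A + (\<integral>\<^sup>+x\<in>A. ennreal ((cmod (f x ^ n))\<^sup>2) \<partial>M)"
    using assms(1,2) by (simp add: nn_integral_add)
  finally show ?thesis .
qed

lemma hardy_norm_power_less_top:
  assumes f: "continuous_on (ball 0 1) f" and "m \<le> n" and fin: "hardy_norm (\<lambda>z. f z ^ n) < top"
  shows "hardy_norm (\<lambda>z. f z ^ m) < top"
proof -
  define S where "S k = (SUP r\<in>{0..<1}. circular_mean (\<lambda>w. ennreal ((cmod (f w ^ k))\<^sup>2)) (complex_of_real r))" for k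
  have "continuous_on (ball 0 1) (\<lambda>z. f z ^ k)" for k using f by (intro continuous_intros)
  then have S: "hardy_norm (\<lambda>z. f z ^ k) = ennroot 2 (S k)" for k
    by (simp add: hardy_norm_eq_circular_mean S_def)
  have "S m \<le> 1 + S n" unfolding S_def[of m]
  proof (rule SUP_least)
    fix r :: real assume r: "r \<in> {0..<1}"
    have "continuous_on UNIV (\<lambda>s. (cmod (f (complex_of_real r * cis (2 * pi * s)) ^ n))\<^sup>2)"
      by (intro continuous_intros continuous_on_compose2[OF f])
         (use r in \<open>auto intro!: continuous_intros simp: norm_mult\<close>)
    then have [measurable]: "(\<lambda>s. (cmod (f (complex_of_real r * cis (2 * pi * s)) ^ n))\<^sup>2) \<in> borel_measurable borel"
      by (rule borel_measurable_continuous_onI)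
    have "(\<lambda>s. ennreal ((cmod (f (complex_of_real r * cis (2 * pi * s)) ^ n))\<^sup>2) * indicator {0..1} s)
        \<in> borel_measurable lborel" by measurable
    from set_nn_integral_sq_norm_power_le[OF this _ \<open>m \<le> n\<close>]
    have "circular_mean (\<lambda>w. ennreal ((cmod (f w ^ m))\<^sup>2)) (complex_of_real r)
        \<le> 1 + circular_mean (\<lambda>w. ennreal ((cmod (f w ^ n))\<^sup>2)) (complex_of_real r)"
      by (simp add: circular_mean_def)
    also have "\<dots> \<le> 1 + S n" unfolding S_def using r by (intro add_left_mono SUP_upper) auto
    finally show "circular_mean (\<lambda>w. ennreal ((cmod (f w ^ m))\<^sup>2)) (complex_of_real r) \<le> 1 + S n" .
  qed
  also have "\<dots> < top" using fin by (simp add: S ennroot_less_top_iff less_top)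
  finally show ?thesis by (simp add: S ennroot_less_top_iff)
qed

lemma bergman_norm_power_less_top:
  assumes f: "continuous_on (ball 0 1) f" and "m \<le> n" and fin: "bergman_norm (\<lambda>z. f z ^ n) < top"
  shows "bergman_norm (\<lambda>z. f z ^ m) < top"
proof -
  define S where "S k = ennreal (1 / pi) * (\<integral>\<^sup>+z\<in>ball 0 1. ennreal ((cmod (f z ^ k))\<^sup>2) \<partial>lborel)" for k
  have S: "bergman_norm (\<lambda>z. f z ^ k) = ennroot 2 (S k)" for k by (simp add: bergman_norm_def S_def)
  have "(\<lambda>z. ennreal ((cmod (f z ^ n))\<^sup>2) * indicator (ball 0 1) z) \<in> borel_measurable lborel"
    using f by (simp add: borel_measurable_continuous_on_ennreal_indicator continuous_intros)
  from set_nn_integral_sq_norm_power_le[OF this _ \<open>m \<le> n\<close>]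
  have "S m \<le> ennreal (1 / pi) * (ennreal pi + (\<integral>\<^sup>+z\<in>ball 0 1. ennreal ((cmod (f z ^ n))\<^sup>2) \<partial>lborel))"
    unfolding S_def by (intro mult_left_mono) (simp_all add: emeasure_unit_disc)
  also have "\<dots> = 1 + S n" by (simp add: S_def distrib_left flip: ennreal_mult)
  also have "\<dots> < top" using fin by (simp add: S ennroot_less_top_iff less_top)
  finally show ?thesis by (simp add: S ennroot_less_top_iff)
qed

lemma ennroot_less_top_transfer:
  assumes "ennroot m X \<le> ennroot n Y" "Y < top" "0 < m" "0 < n"
  shows "X < top"
proof -
  have "ennroot n Y < top" using assms(2,4) by (simp add: ennroot_less_top_iff)
  with assms(1) have "ennroot m X < top" by (rule le_less_trans)
  then show ?thesis using assms(3) by (simp add: ennroot_less_top_iff)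
qed

lemma vanishing_transfer:
  fixes X Y :: "complex \<Rightarrow> ennreal"
  assumes "\<And>a. a \<in> ball 0 1 \<Longrightarrow> X a ^ n \<le> Y a ^ m" "0 < m" "0 < n"
    and "\<forall>e>0. \<exists>r<1. \<forall>a\<in>ball 0 1. r < norm a \<longrightarrow> Y a < ennreal e"
  shows "\<forall>e>0. \<exists>r<1. \<forall>a\<in>ball 0 1. r < norm a \<longrightarrow> X a < ennreal e"
proof (intro allI impI)
  fix e :: real assume "0 < e"
  then have "0 < root m (e ^ n)" using assms(2) by simp
  then obtain r where "r < 1" and r: "\<forall>a\<in>ball 0 1. r < norm a \<longrightarrow> Y a < ennreal (root m (e ^ n))"
    using assms(4) by blast
  have "X a < ennreal e" if "a \<in> ball 0 1" "r < norm a" for a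
    using power_less_ennreal_imp_less[OF assms(1)[OF that(1)] _ assms(2,3) \<open>0 < e\<close>] r that by blast
  then show "\<exists>r<1. \<forall>a\<in>ball 0 1. r < norm a \<longrightarrow> X a < ennreal e" using \<open>r < 1\<close> by blast
qed

lemma hardy_norm_moebius_power_diff_le:
  assumes "f holomorphic_on ball 0 1" "a \<in> ball 0 1" "0 < m" "m < n"
  shows "hardy_norm (\<lambda>z. f (disc_phi a z) ^ m - f a ^ m) ^ n
    \<le> hardy_norm (\<lambda>z. f (disc_phi a z) ^ n - f a ^ n) ^ m"
  using hardy_norm_power_diff_le[OF holomorphic_on_compose_disc_phi[OF assms(1,2)] assms(3,4)] by simp

lemma bergman_norm_moebius_power_diff_le:
  assumes "f holomorphic_on ball 0 1" "a \<in> ball 0 1" "0 < m" "m < n"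
  shows "bergman_norm (\<lambda>z. f (disc_phi a z) ^ m - f a ^ m) ^ n
    \<le> bergman_norm (\<lambda>z. f (disc_phi a z) ^ n - f a ^ n) ^ m"
  using bergman_norm_power_diff_le[OF holomorphic_on_compose_disc_phi[OF assms(1,2)] assms(3,4)] by simp

lemma garsia_H2_power_root_le:
  assumes "f holomorphic_on ball 0 1" "0 < m" "m < n"
  shows "ennroot m (garsia_H2 (\<lambda>z. f z ^ m)) \<le> ennroot n (garsia_H2 (\<lambda>z. f z ^ n))"
  unfolding garsia_H2_def using assms
  by (intro ennroot_SUP_le_ennroot_SUP hardy_norm_moebius_power_diff_le) auto

lemma garsia_A2_power_root_le:
  assumes "f holomorphic_on ball 0 1" "0 < m" "m < n"
  shows "ennroot m (garsia_A2 (\<lambda>z. f z ^ m)) \<le> ennroot n (garsia_A2 (\<lambda>z. f z ^ n))"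
  unfolding garsia_A2_def using assms
  by (intro ennroot_SUP_le_ennroot_SUP bergman_norm_moebius_power_diff_le) auto

lemma VMOA_power_mono:
  assumes f: "f holomorphic_on ball 0 1" and mn: "0 < m" "m < n" and "VMOA (\<lambda>z. f z ^ n)"
  shows "VMOA (\<lambda>z. f z ^ m)"
proof -
  from \<open>VMOA (\<lambda>z. f z ^ n)\<close> have fin: "hardy_norm (\<lambda>z. f z ^ n) < top"
    and van: "\<forall>e>0. \<exists>r<1. \<forall>a\<in>ball 0 1. r < norm a \<longrightarrow>
      hardy_norm (\<lambda>z. f (disc_phi a z) ^ n - f a ^ n) < ennreal e"
    by (simp_all add: VMOA_def)
  show ?thesis unfolding VMOA_def
  proof (intro conjI)
    show "(\<lambda>z. f z ^ m) holomorphic_on ball 0 1" using f by (intro holomorphic_intros)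
    show "hardy_norm (\<lambda>z. f z ^ m) < top"
      using hardy_norm_power_less_top[OF holomorphic_on_imp_continuous_on[OF f] _ fin] mn by simp
  qed (use vanishing_transfer[OF hardy_norm_moebius_power_diff_le[OF f _ mn] mn(1) _ van] mn in simp)
qed

lemma little_Bloch_power_mono:
  assumes f: "f holomorphic_on ball 0 1" and mn: "0 < m" "m < n" and "little_Bloch (\<lambda>z. f z ^ n)"
  shows "little_Bloch (\<lambda>z. f z ^ m)"
proof -
  from \<open>little_Bloch (\<lambda>z. f z ^ n)\<close> have fin: "bergman_norm (\<lambda>z. f z ^ n) < top"
    and van: "\<forall>e>0. \<exists>r<1. \<forall>a\<in>ball 0 1. r < norm a \<longrightarrow>
      bergman_norm (\<lambda>z. f (disc_phi a z) ^ n - f a ^ n) < ennreal e"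
    by (simp_all add: little_Bloch_def)
  show ?thesis unfolding little_Bloch_def
  proof (intro conjI)
    show "(\<lambda>z. f z ^ m) holomorphic_on ball 0 1" using f by (intro holomorphic_intros)
    show "bergman_norm (\<lambda>z. f z ^ m) < top"
      using bergman_norm_power_less_top[OF holomorphic_on_imp_continuous_on[OF f] _ fin] mn by simp
  qed (use vanishing_transfer[OF bergman_norm_moebius_power_diff_le[OF f _ mn] mn(1) _ van] mn in simp)
qed

theorem proposition2p1:
  fixes f :: "complex \<Rightarrow> complex" and m n :: nat
  assumes "0 < m" and "m < n" and "f holomorphic_on ball 0 1"
  shows "ennroot m (garsia_H2 (\<lambda>z. f z ^ m)) \<le> ennroot n (garsia_H2 (\<lambda>z. f z ^ n)) \<and>
         ennroot m (garsia_A2 (\<lambda>z. f z ^ m)) \<le> ennroot n (garsia_A2 (\<lambda>z. f z ^ n)) \<and>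
         (BMOA (\<lambda>z. f z ^ n) \<longrightarrow> BMOA (\<lambda>z. f z ^ m)) \<and>
         (Bloch (\<lambda>z. f z ^ n) \<longrightarrow> Bloch (\<lambda>z. f z ^ m)) \<and>
         (VMOA (\<lambda>z. f z ^ n) \<longrightarrow> VMOA (\<lambda>z. f z ^ m)) \<and>
         (little_Bloch (\<lambda>z. f z ^ n) \<longrightarrow> little_Bloch (\<lambda>z. f z ^ m))"
proof -
  have n: "0 < n" using assms by simp
  have hol: "(\<lambda>z. f z ^ m) holomorphic_on ball 0 1" using assms(3) by (intro holomorphic_intros)
  note H2 = garsia_H2_power_root_le[OF assms(3,1,2)]
  note A2 = garsia_A2_power_root_le[OF assms(3,1,2)]
  have "BMOA (\<lambda>z. f z ^ n) \<longrightarrow> BMOA (\<lambda>z. f z ^ m)"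
    unfolding BMOA_def using hol ennroot_less_top_transfer[OF H2 _ assms(1) n] by blast
  moreover have "Bloch (\<lambda>z. f z ^ n) \<longrightarrow> Bloch (\<lambda>z. f z ^ m)"
    unfolding Bloch_def using hol ennroot_less_top_transfer[OF A2 _ assms(1) n] by blast
  ultimately show ?thesis
    using H2 A2 VMOA_power_mono[OF assms(3,1,2)] little_Bloch_power_mono[OF assms(3,1,2)] by blast
qed

end
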